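(* In every state $\mathbf{x}$ of the common-chunk-protocol Markov process (with $k\ge 2$ chunks and any $\lambda>0$) in which $S\ge 12$, the total download rate satisfies \[ r \;\ge\; \min_{1\le i\le k} \frac{S_i}{2k^3}. \]
   Context: Model: Fix an integer $k\ge 2$ (number of chunks of a file) and $\lambda>0$. There is always exactly one seed holding all $k$ chunks. Non-seed peers arrive according to a Poisson process of rate $\lambda$, each arriving with no chunks; each non-seed peer holds a subset (its profile) of $\{1,\dots,k\}$ and leaves the system immediately once it holds all $k$ chunks. The state $\mathbf{x}$ of the continuous-time Markov process is the number of non-seed peers with each profile. $S$ denotes the total number of peers present, including the seed. Each non-seed peer has an independent rate-1 Poisson clock; at each tick it draws a sample of peers independently and uniformly at random with replacement from the current $S$ peers (seed and itself included) and may instantaneously download at most one chunk that it lacks and that is held by some sampled peer (such a chunk is a "match"). Counting draws with multiplicity, a chunk is "rare" in a sample of 3 draws if exactly one of the 3 draws holds it. Common chunk protocol: (i) a peer with no chunks draws 3 peers and downloads a chunk chosen uniformly among the rare matches, if there is any, otherwise nothing; (ii) a peer holding at least 1 and at most $k-2$ chunks draws 1 peer and downloads a uniformly chosen match, if any, otherwise nothing; (iii) a peer holding exactly $k-1$ chunks draws 3 peers and downloads its missing chunk only if that chunk is held by some draw and every chunk it holds is held by at least 2 of the 3 draws; otherwise nothing. Notation: $S_i$ ($1\le i\le k$) is the number of peers, including the seed, holding chunk $i$. $r=r(\mathbf{x})$ is the total rate of download events in state $\mathbf{x}$, i.e. the sum over all non-seed peers of the probability that a clock tick of that peer results in a download.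 *)

theory Defs
  imports Complex_Main
begin

text \<open>A state assigns to every
profile the number of non-seed peers holding exactly that profile; non-seed peers
never hold the full set (they leave immediately).\<close>

definition profiles :: "nat \<Rightarrow> nat set set" where
  "profiles k = Pow {1..k}"

definition valid_state :: "nat \<Rightarrow> (nat set \<Rightarrow> nat) \<Rightarrow> bool" where
  "valid_state k x \<longleftrightarrow> (\<forall>C. x C > 0 \<longrightarrow> C \<subseteq> {1..k} \<and> C \<noteq> {1..k})"

text \<open>Number of peers (seed included) with profile C; the seed has profile {1..k}.\<close>
definition pop :: "nat \<Rightarrow> (nat set \<Rightarrow> nat) \<Rightarrow> nat set \<Rightarrow> nat" where
  "pop k x C = x C + (if C = {1..k} then 1 else 0)"

definition total_peers :: "nat \<Rightarrow> (nat set \<Rightarrow> nat) \<Rightarrow> nat" where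
  "total_peers k x = (\<Sum>C\<in>profiles k. pop k x C)"

definition holders :: "nat \<Rightarrow> (nat set \<Rightarrow> nat) \<Rightarrow> nat \<Rightarrow> nat" where
  "holders k x i = (\<Sum>C\<in>{C\<in>profiles k. i \<in> C}. pop k x C)"

text \<open>Probability that one uniform draw (from the S peers) satisfies Q.\<close>
definition prob1 :: "nat \<Rightarrow> (nat set \<Rightarrow> nat) \<Rightarrow> (nat set \<Rightarrow> bool) \<Rightarrow> real" where
  "prob1 k x Q = (\<Sum>A\<in>profiles k. real (pop k x A) * (if Q A then 1 else 0))
                  / real (total_peers k x)"

text \<open>Probability that three independent uniform draws with replacement satisfy Q.\<close>
definition prob3 :: "nat \<Rightarrow> (nat set \<Rightarrow> nat) \<Rightarrow> (nat set \<Rightarrow> nat set \<Rightarrow> nat set \<Rightarrow> bool) \<Rightarrow> real" where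
  "prob3 k x Q = (\<Sum>A\<in>profiles k. \<Sum>B\<in>profiles k. \<Sum>D\<in>profiles k.
      real (pop k x A) * real (pop k x B) * real (pop k x D) * (if Q A B D then 1 else 0))
      / real (total_peers k x) ^ 3"

definition cnt3 :: "nat \<Rightarrow> nat set \<Rightarrow> nat set \<Rightarrow> nat set \<Rightarrow> nat" where
  "cnt3 i A B D = (if i \<in> A then 1 else 0) + (if i \<in> B then 1 else 0) + (if i \<in> D then 1 else 0)"

text \<open>Probability that a clock tick of a peer with profile C leads to a download
under the common chunk protocol.\<close>
definition dl_prob :: "nat \<Rightarrow> (nat set \<Rightarrow> nat) \<Rightarrow> nat set \<Rightarrow> real" where
  "dl_prob k x C =
    (if C = {} then prob3 k x (\<lambda>A B D. \<exists>i\<in>{1..k}. cnt3 i A B D = 1)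
     else if card C \<le> k - 2 then prob1 k x (\<lambda>A. \<not> A \<subseteq> C)
     else if card C = k - 1 then
       prob3 k x (\<lambda>A B D. (\<exists>j\<in>{1..k} - C. cnt3 j A B D \<ge> 1) \<and> (\<forall>i\<in>C. cnt3 i A B D \<ge> 2))
     else 0)"

definition dl_rate :: "nat \<Rightarrow> (nat set \<Rightarrow> nat) \<Rightarrow> real" where
  "dl_rate k x = (\<Sum>C\<in>profiles k. real (x C) * dl_prob k x C)"

end

theory Submission
  imports Defs
begin

(* Write S for the number of peers and S_i for the number of holders of chunk i.
   1. Pigeonhole: every non-seed peer lacks some chunk, so some chunk i is missing
      from at least a = (S-1)/k non-seed peers; all of them lack i, so S - S_i >= a.
   2. Only the peers lacking i are counted.  Each of them downloads with probability
      at least (S_i/S) * theta, theta = 3a^2/S^2 <= 1: an empty peer sees exactly one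
      holder of i among its 3 draws with probability 3 S_i (S-S_i)^2/S^3, and a
      middle peer draws a holder of i with probability S_i/S.  The x_T peers of the
      profile T = {1..k} - {i} need i plus two draws covering T, which has
      probability at least S_i x_T^2/S^3; by the tangent-line bound
      t^3 >= 3a^2 t - 2a^3 their total rate still is >= (S_i/S)(theta x_T - 2a^3/S^2).
   3. Summing over the S - S_i >= a peers lacking i gives r >= S_i a^3 / S^3, and
      for S >= 12 one has 2 (S-1)^3 >= S^3, whence r >= S_i / (2 k^3). *)

lemma finite_profiles [simp]: "finite (profiles k)"
  by (simp add: profiles_def)

text \<open>The seed is always present.\<close>
lemma total_peers_pos: "total_peers k x > 0"
proof -
  have "pop k x {1..k} \<le> total_peers k x"
    unfolding total_peers_def by (rule member_le_sum) (auto simp: profiles_def)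
  then show ?thesis
    by (simp add: pop_def)
qed

definition pweight :: "nat \<Rightarrow> (nat set \<Rightarrow> nat) \<Rightarrow> (nat set \<Rightarrow> real) \<Rightarrow> real" where
  "pweight k x f = (\<Sum>A\<in>profiles k. real (pop k x A) * f A)"

lemma pweight_const_one: "pweight k x (\<lambda>A. 1) = real (total_peers k x)"
  unfolding pweight_def total_peers_def by simp

lemma pweight_holds: "pweight k x (\<lambda>A. of_bool (i \<in> A)) = real (holders k x i)"
  unfolding pweight_def holders_def of_nat_sum
  by (simp add: sum.inter_filter of_bool_def if_distrib cong: if_cong)

lemma pweight_lacks:
  "pweight k x (\<lambda>A. of_bool (i \<notin> A)) = real (total_peers k x) - real (holders k x i)"
proof -
  have "pweight k x (\<lambda>A. of_bool (i \<in> A)) + pweight k x (\<lambda>A. of_bool (i \<notin> A))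
        = pweight k x (\<lambda>A. 1)"
    unfolding pweight_def sum.distrib[symmetric] by (rule sum.cong) auto
  then show ?thesis by (simp add: pweight_holds pweight_const_one)
qed

lemma triple_sum_product:
  fixes a b c f g h :: "'a \<Rightarrow> real"
  shows "(\<Sum>A\<in>P. \<Sum>B\<in>P. \<Sum>D\<in>P. a A * b B * c D * (f A * g B * h D))
       = (\<Sum>A\<in>P. a A * f A) * (\<Sum>B\<in>P. b B * g B) * (\<Sum>D\<in>P. c D * h D)"
proof -
  have "(\<Sum>A\<in>P. a A * f A) * (\<Sum>B\<in>P. b B * g B) * (\<Sum>D\<in>P. c D * h D)
      = (\<Sum>A\<in>P. a A * f A * ((\<Sum>B\<in>P. b B * g B) * (\<Sum>D\<in>P. c D * h D)))"
    by (simp add: sum_distrib_right mult.assoc)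
  also have "\<dots> = (\<Sum>A\<in>P. a A * f A * (\<Sum>B\<in>P. b B * g B * (\<Sum>D\<in>P. c D * h D)))"
    by (simp only: sum_distrib_right)
  also have "\<dots> = (\<Sum>A\<in>P. \<Sum>B\<in>P. a A * f A * (b B * g B) * (\<Sum>D\<in>P. c D * h D))"
    by (simp only: sum_distrib_left mult.assoc)
  also have "\<dots> = (\<Sum>A\<in>P. \<Sum>B\<in>P. \<Sum>D\<in>P. a A * f A * (b B * g B) * (c D * h D))"
    by (intro sum.cong refl) (simp add: sum_distrib_left)
  finally show ?thesis
    by (simp add: mult_ac)
qed

lemma prob1_ge_pweight:
  assumes "\<And>A. A \<in> profiles k \<Longrightarrow> f A \<le> of_bool (Q A)"
  shows "prob1 k x Q \<ge> pweight k x f / real (total_peers k x)"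
  unfolding prob1_def pweight_def
  by (intro divide_right_mono sum_mono mult_left_mono) (auto dest: assms)

lemma prob3_ge_weight:
  assumes "\<And>A B D. A \<in> profiles k \<Longrightarrow> B \<in> profiles k \<Longrightarrow> D \<in> profiles k \<Longrightarrow>
             F A B D \<le> of_bool (Q A B D)"
  shows "prob3 k x Q \<ge> (\<Sum>A\<in>profiles k. \<Sum>B\<in>profiles k. \<Sum>D\<in>profiles k.
           real (pop k x A) * real (pop k x B) * real (pop k x D) * F A B D)
           / real (total_peers k x) ^ 3"
  unfolding prob3_def
  by (intro divide_right_mono sum_mono mult_left_mono) (auto dest: assms)

lemma dl_prob_nonneg: "dl_prob k x C \<ge> 0"
  unfolding dl_prob_def prob1_def prob3_def
  by (auto intro!: divide_nonneg_nonneg sum_nonneg)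

text \<open>An empty peer downloads chunk \<open>i\<close> whenever exactly one of its three draws holds
  it; the three positions of that draw give three disjoint events.\<close>
lemma dl_prob_empty:
  assumes "i \<in> {1..k}"
  shows "dl_prob k x {} \<ge> 3 * real (holders k x i)
           * (real (total_peers k x) - real (holders k x i))^2 / real (total_peers k x) ^ 3"
proof -
  let ?p = "\<lambda>A. real (pop k x A)"
  let ?I = "\<lambda>A. of_bool (i \<in> A) :: real"
  let ?O = "\<lambda>A. of_bool (i \<notin> A) :: real"
  define F where "F = (\<lambda>A B D. ?I A * ?O B * ?O D + ?O A * ?I B * ?O D + ?O A * ?O B * ?I D)"
  have "dl_prob k x {} = prob3 k x (\<lambda>A B D. \<exists>i\<in>{1..k}. cnt3 i A B D = 1)"
    by (simp add: dl_prob_def)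
  also have "\<dots> \<ge> (\<Sum>A\<in>profiles k. \<Sum>B\<in>profiles k. \<Sum>D\<in>profiles k.
      ?p A * ?p B * ?p D * F A B D) / real (total_peers k x) ^ 3"
    by (rule prob3_ge_weight) (use assms in \<open>auto simp: F_def cnt3_def\<close>)
  moreover have "(\<Sum>A\<in>profiles k. \<Sum>B\<in>profiles k. \<Sum>D\<in>profiles k. ?p A * ?p B * ?p D * F A B D)
      = 3 * real (holders k x i) * (real (total_peers k x) - real (holders k x i))^2"
    unfolding F_def distrib_left sum.distrib triple_sum_product
    using pweight_holds[of k x i] pweight_lacks[of k x i]
    by (simp add: pweight_def power2_eq_square)
  ultimately show ?thesis by simp
qed

text \<open>A peer with between 1 and \<open>k-2\<close> chunks, lacking \<open>i\<close>, downloads whenever its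
  single draw holds \<open>i\<close>.\<close>
lemma dl_prob_middle:
  assumes "C \<noteq> {}" "card C \<le> k - 2" "i \<notin> C"
  shows "dl_prob k x C \<ge> real (holders k x i) / real (total_peers k x)"
proof -
  have "dl_prob k x C = prob1 k x (\<lambda>A. \<not> A \<subseteq> C)"
    using assms by (simp add: dl_prob_def)
  also have "\<dots> \<ge> pweight k x (\<lambda>A. of_bool (i \<in> A)) / real (total_peers k x)"
    by (rule prob1_ge_pweight) (use assms in auto)
  finally show ?thesis by (simp add: pweight_holds)
qed

text \<open>A peer holding all chunks but \<open>i\<close> downloads if the first draw holds \<open>i\<close> and
  the other two draws are peers of its own profile (or the seed).\<close>
lemma dl_prob_top:
  assumes "k \<ge> 2" "i \<in> {1..k}"
  shows "dl_prob k x ({1..k} - {i})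
           \<ge> real (holders k x i) * real (x ({1..k} - {i}))^2 / real (total_peers k x) ^ 3"
proof -
  define T where "T = {1..k} - {i}"
  let ?p = "\<lambda>A. real (pop k x A)"
  let ?I = "\<lambda>A. of_bool (i \<in> A) :: real"
  let ?J = "\<lambda>A. of_bool (T \<subseteq> A) :: real"
  have card_T: "card T = k - 1"
    using assms by (simp add: T_def)
  moreover from card_T assms have "T \<noteq> {}" and "\<not> card T \<le> k - 2"
    by auto
  ultimately have "dl_prob k x T = prob3 k x (\<lambda>A B D. (\<exists>j\<in>{1..k} - T. cnt3 j A B D \<ge> 1)
                                              \<and> (\<forall>i\<in>T. cnt3 i A B D \<ge> 2))"
    by (simp add: dl_prob_def)
  also have "\<dots> \<ge> (\<Sum>A\<in>profiles k. \<Sum>B\<in>profiles k. \<Sum>D\<in>profiles k.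
      ?p A * ?p B * ?p D * (?I A * ?J B * ?J D)) / real (total_peers k x) ^ 3"
    by (rule prob3_ge_weight) (use assms in \<open>auto simp: T_def cnt3_def subset_iff\<close>)
  moreover have "(\<Sum>A\<in>profiles k. \<Sum>B\<in>profiles k. \<Sum>D\<in>profiles k.
      ?p A * ?p B * ?p D * (?I A * ?J B * ?J D)) = real (holders k x i) * (pweight k x ?J)^2"
    unfolding triple_sum_product using pweight_holds[of k x i]
    by (simp add: pweight_def power2_eq_square)
  ultimately have bound: "dl_prob k x T
      \<ge> real (holders k x i) * (pweight k x ?J)^2 / real (total_peers k x) ^ 3"
    by simp
  have "real (x T) \<le> ?p T * ?J T"
    by (simp add: pop_def)
  also have "\<dots> \<le> pweight k x ?J"
    unfolding pweight_def by (rule member_le_sum) (auto simp: T_def profiles_def)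
  finally have "real (x T)^2 \<le> (pweight k x ?J)^2"
    by (intro power_mono) auto
  then have "real (holders k x i) * real (x T)^2 / real (total_peers k x) ^ 3
      \<le> real (holders k x i) * (pweight k x ?J)^2 / real (total_peers k x) ^ 3"
    by (intro divide_right_mono mult_left_mono) auto
  with bound show ?thesis
    unfolding T_def by linarith
qed

definition lacking :: "nat \<Rightarrow> (nat set \<Rightarrow> nat) \<Rightarrow> nat \<Rightarrow> nat" where
  "lacking k x i = (\<Sum>C\<in>{C\<in>profiles k. i \<notin> C}. x C)"

text \<open>Since the seed holds every chunk, each peer either holds \<open>i\<close> or is a non-seed
  peer lacking it.\<close>
lemma total_peers_split:
  assumes "i \<in> {1..k}"
  shows "total_peers k x = holders k x i + lacking k x i"
proof -
  have split: "profiles k = {C\<in>profiles k. i \<in> C} \<union> {C\<in>profiles k. i \<notin> C}"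
    by auto
  have "(\<Sum>C\<in>{C\<in>profiles k. i \<notin> C}. pop k x C) = lacking k x i"
    unfolding lacking_def by (rule sum.cong) (use assms in \<open>auto simp: pop_def\<close>)
  then show ?thesis
    unfolding total_peers_def holders_def
    by (subst split, subst sum.union_disjoint) auto
qed

text \<open>Every non-seed peer lacks some chunk, so the lacking counts sum to at least
  the number of non-seed peers.\<close>
lemma total_peers_le_sum_lacking:
  assumes "valid_state k x"
  shows "total_peers k x \<le> Suc (\<Sum>i\<in>{1..k}. lacking k x i)"
proof -
  have "total_peers k x = Suc (\<Sum>C\<in>profiles k. x C)"
    unfolding total_peers_def pop_def by (simp add: sum.distrib profiles_def)
  also have "(\<Sum>C\<in>profiles k. x C) \<le> (\<Sum>C\<in>profiles k. \<Sum>i\<in>{1..k}. if i \<notin> C then x C else 0)"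
  proof (rule sum_mono)
    fix C
    show "x C \<le> (\<Sum>i\<in>{1..k}. if i \<notin> C then x C else 0)"
    proof (cases "x C = 0")
      case False
      then have "C \<subseteq> {1..k}" "C \<noteq> {1..k}"
        using assms by (auto simp: valid_state_def)
      then obtain j where j: "j \<in> {1..k}" "j \<notin> C"
        by blast
      then show ?thesis
        using member_le_sum[of j "{1..k}" "\<lambda>i. if i \<notin> C then x C else 0"] by auto
    qed simp
  qed
  also have "(\<Sum>C\<in>profiles k. \<Sum>i\<in>{1..k}. if i \<notin> C then x C else 0)
           = (\<Sum>i\<in>{1..k}. lacking k x i)"
    unfolding lacking_def by (subst sum.swap) (simp add: sum.inter_filter)
  finally show ?thesis
    by simp
qed

lemma exists_much_lacked_chunk:
  assumes "k \<ge> 1" "valid_state k x"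
  obtains i where "i \<in> {1..k}" "real (lacking k x i) \<ge> (real (total_peers k x) - 1) / real k"
proof (rule ccontr)
  assume "\<not> thesis"
  with that have "\<And>i. i \<in> {1..k} \<Longrightarrow> real (lacking k x i) < (real (total_peers k x) - 1) / real k"
    by force
  then have "(\<Sum>i\<in>{1..k}. real (lacking k x i)) < real k * ((real (total_peers k x) - 1) / real k)"
    using sum_bounded_above_strict[of "{1..k}" "\<lambda>i. real (lacking k x i)"
          "(real (total_peers k x) - 1) / real k"] assms(1) by simp
  also have "\<dots> = real (total_peers k x) - 1"
    using assms(1) by simp
  finally have "(\<Sum>i\<in>{1..k}. real (lacking k x i)) < real (total_peers k x) - 1" .
  moreover have "real (total_peers k x) \<le> 1 + (\<Sum>i\<in>{1..k}. real (lacking k x i))"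
    using total_peers_le_sum_lacking[OF assms(2)] by (simp flip: of_nat_sum)
  ultimately show False
    by linarith
qed

lemma dl_prob_lacking_peer:
  fixes k i :: nat and x :: "nat set \<Rightarrow> nat" and a :: real
  defines "S \<equiv> real (total_peers k x)" and "H \<equiv> real (holders k x i)"
  assumes "i \<in> {1..k}" "C \<in> profiles k" "i \<notin> C" "C \<noteq> {1..k} - {i}"
    and "0 \<le> a" "a \<le> real (lacking k x i)" "3 * a^2 \<le> S^2"
  shows "dl_prob k x C \<ge> H / S * (3 * a^2 / S^2)"
proof -
  have S_pos: "S > 0" and H_nonneg: "H \<ge> 0"
    using total_peers_pos[of k x] by (simp_all add: S_def H_def)
  have lacking_eq: "S - H = real (lacking k x i)"
    using total_peers_split[OF assms(3), of x] by (simp add: S_def H_def)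
  have theta_le_1: "3 * a^2 / S^2 \<le> 1"
    using assms(9) S_pos by simp
  have "C \<subset> {1..k} - {i}"
    using assms(4-6) by (auto simp: profiles_def)
  then have "card C < k - 1"
    using psubset_card_mono[of "{1..k} - {i}" C] assms(3) by simp
  then consider "C = {}" | "C \<noteq> {}" "card C \<le> k - 2"
    by linarith
  then show ?thesis
  proof cases
    case 1
    have "a^2 \<le> (S - H)^2"
      using assms(7,8) lacking_eq by (intro power_mono) auto
    then have "H / S * (3 * a^2 / S^2) \<le> H / S * (3 * (S - H)^2 / S^2)"
      using S_pos H_nonneg by (intro mult_left_mono divide_right_mono) auto
    also have "\<dots> = 3 * H * (S - H)^2 / S^3"
      using S_pos by (simp add: field_simps power3_eq_cube power2_eq_square)
    also have "\<dots> \<le> dl_prob k x C"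
      using dl_prob_empty[OF assms(3), of x] 1 by (simp add: S_def H_def)
    finally show ?thesis .
  next
    case 2
    have "H / S * (3 * a^2 / S^2) \<le> H / S"
      using mult_left_mono[OF theta_le_1, of "H / S"] S_pos H_nonneg by simp
    also have "\<dots> \<le> dl_prob k x C"
      using dl_prob_middle[OF 2 assms(5), of x] by (simp add: S_def H_def)
    finally show ?thesis .
  qed
qed

text \<open>Tangent-line bound for the cube: \<open>t\<^sup>3 \<ge> 3a\<^sup>2 t - 2a\<^sup>3\<close>; it linearises the
  contribution of the peers missing only chunk \<open>i\<close>.\<close>
lemma cube_ge_tangent:
  fixes t a :: real
  assumes "t \<ge> 0" "a \<ge> 0"
  shows "t^3 \<ge> 3 * a^2 * t - 2 * a^3"
proof -
  have "0 \<le> (t - a)^2 * (t + 2 * a)"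
    using assms by simp
  also have "\<dots> = t^3 - 3 * a^2 * t + 2 * a^3"
    by (simp add: algebra_simps power2_eq_square power3_eq_cube)
  finally show ?thesis
    by simp
qed

lemma top_profile_contribution:
  fixes k i :: nat and x :: "nat set \<Rightarrow> nat" and a :: real
  defines "S \<equiv> real (total_peers k x)" and "H \<equiv> real (holders k x i)"
    and "T \<equiv> {1..k} - {i}"
  assumes "k \<ge> 2" "i \<in> {1..k}" "0 \<le> a"
  shows "real (x T) * dl_prob k x T \<ge> H / S * ((3 * a^2 * real (x T) - 2 * a^3) / S^2)"
proof -
  have S_pos: "S > 0" and H_nonneg: "H \<ge> 0"
    using total_peers_pos[of k x] by (simp_all add: S_def H_def)
  have "H / S * ((3 * a^2 * real (x T) - 2 * a^3) / S^2) \<le> H / S * (real (x T)^3 / S^2)"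
    using cube_ge_tangent[of "real (x T)" a] assms(6) S_pos H_nonneg
    by (intro mult_left_mono divide_right_mono) auto
  also have "\<dots> = real (x T) * (H * real (x T)^2 / S^3)"
    using S_pos by (simp add: field_simps power3_eq_cube power2_eq_square)
  also have "\<dots> \<le> real (x T) * dl_prob k x T"
    using dl_prob_top[OF assms(4,5), of x] by (intro mult_left_mono) (simp_all add: S_def H_def T_def)
  finally show ?thesis .
qed

lemma dl_rate_ge_cube:
  fixes k i :: nat and x :: "nat set \<Rightarrow> nat" and a :: real
  defines "S \<equiv> real (total_peers k x)" and "H \<equiv> real (holders k x i)"
  assumes "k \<ge> 2" "i \<in> {1..k}"
    and "0 \<le> a" "a \<le> real (lacking k x i)" "3 * a^2 \<le> S^2"
  shows "dl_rate k x \<ge> H * a^3 / S^3"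
proof -
  define L where "L = {C\<in>profiles k. i \<notin> C}"
  define T where "T = {1..k} - {i}"
  define \<theta> where "\<theta> = 3 * a^2 / S^2"
  have S_pos: "S > 0"
    using total_peers_pos[of k x] by (simp add: S_def)
  have T_in_L: "T \<in> L"
    by (auto simp: L_def T_def profiles_def)
  have lacking_sum: "real (lacking k x i) = real (x T) + (\<Sum>C\<in>L - {T}. real (x C))"
    unfolding lacking_def L_def[symmetric] of_nat_sum using T_in_L
    by (simp add: sum.remove L_def)
  have rest: "(\<Sum>C\<in>L - {T}. real (x C) * dl_prob k x C) \<ge> (\<Sum>C\<in>L - {T}. H / S * \<theta> * real (x C))"
  proof (rule sum_mono)
    fix C
    assume "C \<in> L - {T}"
    then have "H / S * \<theta> \<le> dl_prob k x C"
      using dl_prob_lacking_peer[OF assms(4) _ _ _ assms(5,6) assms(7)[unfolded S_def]]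
      by (simp add: L_def T_def \<theta>_def S_def H_def)
    then show "H / S * \<theta> * real (x C) \<le> real (x C) * dl_prob k x C"
      using mult_left_mono[of "H / S * \<theta>" "dl_prob k x C" "real (x C)"] by (simp add: mult_ac)
  qed
  have "H * a^3 / S^3 = H / S * (\<theta> * a - 2 * a^3 / S^2)"
    using S_pos by (simp add: \<theta>_def field_simps power2_eq_square power3_eq_cube)
  also have "\<dots> \<le> H / S * (\<theta> * real (lacking k x i) - 2 * a^3 / S^2)"
    using assms(6) S_pos by (intro mult_left_mono diff_right_mono) (auto simp: \<theta>_def H_def)
  also have "\<dots> = H / S * ((3 * a^2 * real (x T) - 2 * a^3) / S^2)
                   + (\<Sum>C\<in>L - {T}. H / S * \<theta> * real (x C))"
    unfolding lacking_sum \<theta>_def sum_distrib_left[symmetric] using S_pos by (simp add: field_simps)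
  also have "\<dots> \<le> real (x T) * dl_prob k x T + (\<Sum>C\<in>L - {T}. real (x C) * dl_prob k x C)"
    using top_profile_contribution[OF assms(3,4,5), of x] rest
    by (intro add_mono) (simp_all add: S_def H_def T_def)
  also have "\<dots> = (\<Sum>C\<in>L. real (x C) * dl_prob k x C)"
    using T_in_L by (simp add: sum.remove L_def)
  also have "\<dots> \<le> dl_rate k x"
    unfolding dl_rate_def by (rule sum_mono2) (auto simp: L_def dl_prob_nonneg)
  finally show ?thesis .
qed

text \<open>For \<open>S \<ge> 12\<close> removing the seed loses at most a factor \<open>2\<close> in the cube.\<close>
lemma cube_minus_one_ge_half:
  fixes S :: real
  assumes "S \<ge> 12"
  shows "S^3 \<le> 2 * (S - 1)^3"
proof -
  define u where "u = S - 1"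
  have u: "u \<ge> 11"
    using assms by (simp add: u_def)
  have "u^2 \<ge> 11 * u" and "u^3 \<ge> 11 * u^2"
    using u by (simp_all add: power2_eq_square power3_eq_cube mult_right_mono)
  moreover have "(u + 1)^3 = u^3 + 3 * u^2 + 3 * u + 1"
    by (simp add: power3_eq_cube power2_eq_square algebra_simps)
  ultimately show ?thesis
    using u by (simp add: u_def)
qed

lemma seedless_cube_bound:
  fixes S H k :: real
  assumes "S \<ge> 12" "H \<ge> 0" "k > 0"
  shows "H / (2 * k^3) \<le> H * ((S - 1) / k)^3 / S^3"
proof -
  have "H / (2 * k^3) = H * S^3 / (2 * k^3 * S^3)"
    using assms(1) by simp
  also have "\<dots> \<le> H * (2 * (S - 1)^3) / (2 * k^3 * S^3)"
    using cube_minus_one_ge_half[OF assms(1)] assms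
    by (intro divide_right_mono mult_left_mono) auto
  also have "\<dots> = H * ((S - 1) / k)^3 / S^3"
    using assms by (simp add: power_divide field_simps)
  finally show ?thesis .
qed

theorem lemma2:
  fixes k :: nat and lam :: real and x :: "nat set \<Rightarrow> nat"
  assumes "k \<ge> 2" and "lam > 0"
    and "valid_state k x"
    and "total_peers k x \<ge> 12"
  shows "dl_rate k x \<ge> (MIN i\<in>{1..k}. real (holders k x i) / (2 * real k ^ 3))"
proof -
  define S where "S = real (total_peers k x)"
  define a where "a = (S - 1) / real k"
  obtain i where i: "i \<in> {1..k}" and lacking_i: "a \<le> real (lacking k x i)"
    using exists_much_lacked_chunk[OF _ assms(3)] assms(1) unfolding a_def S_def by force
  define H where "H = real (holders k x i)"
  have S_ge: "S \<ge> 12"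
    using assms(4) by (simp add: S_def)
  have a_nonneg: "a \<ge> 0"
    using S_ge by (simp add: a_def)
  have "a \<le> (S - 1) / 2"
    unfolding a_def using assms(1) S_ge by (intro divide_left_mono) auto
  with a_nonneg have "4 * a^2 \<le> S^2"
    using power_mono[of a "S / 2" 2] by (simp add: power_divide)
  then have "3 * a^2 \<le> S^2"
    using zero_le_power2[of a] by linarith
  then have rate: "H * a^3 / S^3 \<le> dl_rate k x"
    using dl_rate_ge_cube[OF assms(1) i a_nonneg lacking_i] by (simp add: S_def H_def)
  have "(MIN i\<in>{1..k}. real (holders k x i) / (2 * real k ^ 3)) \<le> H / (2 * real k ^ 3)"
    unfolding H_def by (rule Min_le) (use i in auto)
  also have "\<dots> \<le> H * a^3 / S^3"
    unfolding a_def by (rule seedless_cube_bound) (use S_ge assms(1) in \<open>auto simp: H_def\<close>)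
  also have "\<dots> \<le> dl_rate k x"
    by (rule rate)
  finally show ?thesis .
qed

end
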